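(* Let $p$ be an odd prime and $l_1,l_2\ge0$ integers, and put $d=l_1+l_2-\tfrac12$. There exists an integer $s_0\ge0$ such that for every integer $s\ge s_0$ and every integer $a$ with $\frac{p^s-1}2-l_1\ge l_2+a\ge0$, $$\left|\binom{-\frac12-l_1}{l_2+a}-\binom{\frac{p^s-1}2-l_1}{l_2+a}\right|_p\le p^{-(s-d-a)}.$$
   Context: $|\cdot|_p$ is the $p$-adic norm on $\mathbb Q_p$. For $y\in\mathbb Q_p$ and an integer $k\ge0$, $\binom{y}{k}=\frac{y(y-1)\cdots(y-k+1)}{k!}$; the numbers $\binom{-1/2-l_1}{k}$ lie in $\mathbb Z_p$. *)

theory Defs
  imports "HOL-Computational_Algebra.Computational_Algebra"
begin

definition padic_val_rat :: "nat \<Rightarrow> rat \<Rightarrow> int" where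
  "padic_val_rat p q =
     (case quotient_of q of (a, b) \<Rightarrow>
        int (multiplicity (int p) a) - int (multiplicity (int p) b))"

definition padic_norm :: "nat \<Rightarrow> rat \<Rightarrow> real" where
  "padic_norm p q = (if q = 0 then 0 else real p powr (- real_of_int (padic_val_rat p q)))"

end

theory Submission
  imports Defs
begin

text \<open>Both binomial coefficients are values of the polynomial
  \<open>x(x-1)\<cdots>(x-k+1)/k!\<close> at half-integers \<open>m/2\<close> and \<open>(m+p^s)/2\<close>.
  Writing them as \<open>\<Prod>(m-2i)/(2^k k!)\<close> and \<open>\<Prod>(m+p^s-2i)/(2^k k!)\<close>, the two numerators
  agree modulo \<open>p^s\<close>, while the denominator has \<open>p\<close>-adic valuation \<open>v_p(k!) \<le> k - 1\<close>
  since \<open>p\<close> is odd. Hence the difference has valuation at least \<open>s - k + 1\<close>, which is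
  stronger than the claimed bound for every \<open>s\<close>, so \<open>s\<^sub>0 = 0\<close> works.\<close>

lemma padic_val_rat_of_int_divide:
  fixes p :: nat and M N :: int
  assumes "prime p" "M \<noteq> 0" "N \<noteq> 0"
  shows "padic_val_rat p (of_int M / of_int N)
           = int (multiplicity (int p) M) - int (multiplicity (int p) N)"
proof -
  obtain a b where ab: "quotient_of (of_int M / of_int N) = (a, b)"
    by (cases "quotient_of (of_int M / of_int N :: rat)") auto
  have "b > 0" using quotient_of_denom_pos[OF ab] .
  have "(of_int M / of_int N :: rat) = of_int a / of_int b"
    using quotient_of_div[OF ab] .
  with \<open>b > 0\<close> assms(3) have "of_int (M * b) = (of_int (a * N) :: rat)"
    by (simp add: field_simps)
  hence "M * b = a * N" by (simp only: of_int_eq_iff)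
  moreover have "a \<noteq> 0" using \<open>M * b = a * N\<close> \<open>b > 0\<close> assms(2) by auto
  ultimately have "multiplicity (int p) M + multiplicity (int p) b
                   = multiplicity (int p) a + multiplicity (int p) N"
    using assms \<open>b > 0\<close>
    by (metis less_irrefl prime_elem_multiplicity_mult_distrib prime_nat_int_transfer
        prime_imp_prime_elem)
  thus ?thesis using ab unfolding padic_val_rat_def by simp
qed

lemma padic_norm_of_int_divide_le:
  fixes p s :: nat and M N :: int
  assumes "prime p" "N \<noteq> 0" "int p ^ s dvd M"
  shows "padic_norm p (of_int M / of_int N)
           \<le> real p powr - (real s - real (multiplicity (int p) N))"
proof (cases "M = 0")
  case False
  have "s \<le> multiplicity (int p) M"
    using assms(1,3) False
    by (intro multiplicity_geI) (auto simp: prime_gt_1_nat)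
  moreover have "real p \<ge> 1" using assms(1) prime_ge_1_nat by simp
  ultimately show ?thesis
    using False assms
    by (auto simp: padic_norm_def padic_val_rat_of_int_divide intro!: powr_mono)
qed (simp add: padic_norm_def)

lemma dvd_prod_add_diff:
  fixes P :: int
  assumes "\<And>i. i \<in> A \<Longrightarrow> P dvd g i"
  shows "P dvd (\<Prod>i\<in>A. f i + g i) - (\<Prod>i\<in>A. f i)"
proof -
  have "(\<Prod>i\<in>A. f i + g i) mod P = (\<Prod>i\<in>A. (f i + g i) mod P) mod P"
    by (simp add: mod_prod_eq)
  also have "\<dots> = (\<Prod>i\<in>A. f i mod P) mod P"
  proof (rule arg_cong[where f = "\<lambda>x. x mod P"], rule prod.cong)
    show "(f i + g i) mod P = f i mod P" if "i \<in> A" for i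
      using assms[OF that] by (auto elim!: dvdE)
  qed simp
  also have "\<dots> = (\<Prod>i\<in>A. f i) mod P"
    by (simp add: mod_prod_eq)
  finally show ?thesis by (simp add: mod_eq_dvd_iff)
qed

lemma multiplicity_fact_rec:
  fixes p k :: nat
  assumes "prime p"
  shows "multiplicity (int p) (fact k :: int) = k div p + multiplicity (int p) (fact (k div p) :: int)"
proof (induction k)
  case (Suc k)
  have pp: "prime_elem (int p)" and p1: "p > 1"
    using assms prime_gt_1_nat by simp_all
  have multiplicity_fact_Suc: "multiplicity (int p) (fact (Suc n) :: int)
      = multiplicity (int p) (int (Suc n)) + multiplicity (int p) (fact n :: int)" for n
    by (simp add: fact_Suc[of n] prime_elem_multiplicity_mult_distrib[OF pp] del: of_nat_Suc)
  show ?case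
  proof (cases "p dvd Suc k")
    case True
    hence div: "Suc k div p = Suc (k div p)" by (simp add: div_Suc)
    have "int (Suc k) = int p * int (Suc (k div p))"
      using True div by (metis dvd_mult_div_cancel of_nat_mult)
    hence "multiplicity (int p) (int (Suc k)) = Suc (multiplicity (int p) (int (Suc (k div p))))"
      using p1 by (simp add: multiplicity_times_same del: of_nat_Suc)
    then show ?thesis
      using Suc.IH unfolding div multiplicity_fact_Suc by simp
  next
    case False
    hence div: "Suc k div p = k div p" by (simp add: div_Suc dvd_eq_mod_eq_0)
    have "multiplicity (int p) (int (Suc k)) = 0"
      using False by (intro not_dvd_imp_multiplicity_0) (simp del: of_nat_Suc)
    then show ?thesis
      using Suc.IH unfolding div multiplicity_fact_Suc by simp
  qed
qed simp

lemma multiplicity_fact_less: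
  fixes p k :: nat
  assumes "prime p" "k > 0"
  shows "multiplicity (int p) (fact k :: int) < k"
  using assms(2)
proof (induction k rule: less_induct)
  case (less k)
  have "p \<ge> 2" using assms(1) prime_ge_2_nat by blast
  hence "2 * (k div p) \<le> k"
    by (metis dual_order.trans mult_le_mono1 times_div_less_eq_dividend)
  moreover have "multiplicity (int p) (fact (k div p) :: int) < k div p" if "k div p > 0"
    using less.IH that \<open>p \<ge> 2\<close> less.prems by simp
  ultimately show ?case
    using multiplicity_fact_rec[OF assms(1), of k] less.prems by (cases "k div p = 0") auto
qed

lemma gbinomial_half_of_int:
  "(of_int m / 2 :: 'a :: field_char_0) gchoose k
     = of_int (\<Prod>i<k. m - 2 * int i) / (2 ^ k * fact k)"
proof -
  have "(\<Prod>i=0..<k. (of_int m / 2 :: 'a) - of_nat i) = (\<Prod>i<k. of_int (m - 2 * int i) / 2)"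
    by (intro prod.cong) (auto simp: field_simps atLeast0LessThan)
  thus ?thesis by (simp add: gbinomial_prod_rev prod_dividef)
qed

lemma padic_norm_gchoose_half_shift_diff_le:
  fixes p s k :: nat and m P :: int
  assumes "prime p" "odd p" "int p ^ s dvd P"
  shows "padic_norm p ((of_int m / 2 gchoose k) - (of_int (m + P) / 2 gchoose k :: rat))
           \<le> real p powr - (real s - real k + 1)"
proof (cases "k = 0")
  case False
  hence "k > 0" by simp
  define N :: int where "N = 2 ^ k * fact k"
  define A where "A = (\<Prod>i<k. m - 2 * int i)"
  define B where "B = (\<Prod>i<k. m - 2 * int i + P)"
  have "(\<Prod>i<k. m + P - 2 * int i) = B"
    unfolding B_def by (intro prod.cong) auto
  hence diff: "(of_int m / 2 gchoose k) - (of_int (m + P) / 2 gchoose k :: rat)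
               = of_int (A - B) / of_int N"
    unfolding gbinomial_half_of_int A_def N_def by (simp add: diff_divide_distrib)
  have "int p ^ s dvd A - B"
    using dvd_prod_add_diff[of "{..<k}" "int p ^ s" "\<lambda>_. P" "\<lambda>i. m - 2 * int i"] assms(3)
    unfolding A_def B_def by (simp add: dvd_diff_commute)
  have "\<not> p dvd 2"
    using assms(1,2) prime_ge_2_nat[of p] dvd_imp_le[of p 2] by auto
  hence "\<not> int p dvd int 2" using int_dvd_int_iff by blast
  hence "\<not> int p dvd 2 ^ k"
    using assms(1) prime_dvd_power[of "int p" 2 k] by auto
  hence "multiplicity (int p) (2 ^ k :: int) = 0"
    by (rule not_dvd_imp_multiplicity_0)
  hence "multiplicity (int p) N < k"
    using multiplicity_fact_less[OF assms(1) \<open>k > 0\<close>] assms(1)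
    by (simp add: N_def prime_elem_multiplicity_mult_distrib)
  moreover have "real p \<ge> 1" using assms(1) prime_ge_1_nat by simp
  ultimately have "real p powr - (real s - real (multiplicity (int p) N))
                   \<le> real p powr - (real s - real k + 1)"
    by (intro powr_mono) auto
  with padic_norm_of_int_divide_le[OF assms(1) _ \<open>int p ^ s dvd A - B\<close>, of N]
  show ?thesis unfolding diff N_def by simp
qed (simp add: padic_norm_def)

theorem lemma10p3:
  fixes p l1 l2 :: nat
  assumes "prime p" and "odd p"
  shows "\<exists>s0::nat. \<forall>s\<ge>s0. \<forall>a::int.
     ((int p ^ s - 1) div 2 - int l1 \<ge> int l2 + a \<and> int l2 + a \<ge> 0) \<longrightarrow>
     padic_norm p
       (((- 1/2 - of_nat l1 :: rat) gchoose nat (int l2 + a))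
        - (((of_nat p ^ s - 1) / 2 - of_nat l1 :: rat) gchoose nat (int l2 + a)))
     \<le> real p powr (- (real s - (real l1 + real l2 - 1/2) - real_of_int a))"
proof (intro exI[of _ 0] allI impI)
  fix s :: nat and a :: int
  assume "(int p ^ s - 1) div 2 - int l1 \<ge> int l2 + a \<and> int l2 + a \<ge> 0"
  hence k: "real (nat (int l2 + a)) = real l2 + real_of_int a" by simp
  define m where "m = - 1 - 2 * int l1"
  have halves: "- 1/2 - of_nat l1 = (of_int m / 2 :: rat)"
    "(of_nat p ^ s - 1) / 2 - of_nat l1 = (of_int (m + int p ^ s) / 2 :: rat)"
    by (simp_all add: m_def field_simps)
  have "padic_norm p
       (((- 1/2 - of_nat l1 :: rat) gchoose nat (int l2 + a))
        - (((of_nat p ^ s - 1) / 2 - of_nat l1 :: rat) gchoose nat (int l2 + a)))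
     \<le> real p powr - (real s - real (nat (int l2 + a)) + 1)"
    unfolding halves by (rule padic_norm_gchoose_half_shift_diff_le[OF assms dvd_refl])
  also have "\<dots> \<le> real p powr (- (real s - (real l1 + real l2 - 1/2) - real_of_int a))"
    using assms(1) prime_ge_1_nat[of p] k by (intro powr_mono) auto
  finally show "padic_norm p
       (((- 1/2 - of_nat l1 :: rat) gchoose nat (int l2 + a))
        - (((of_nat p ^ s - 1) / 2 - of_nat l1 :: rat) gchoose nat (int l2 + a)))
     \<le> real p powr (- (real s - (real l1 + real l2 - 1/2) - real_of_int a))" .
qed

end
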